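(* Let $d\ge 2$, let $\varphi=\sum_{\bm{k}\in\mathbb{Z}^d}\varphi_{\bm{k}}z^{\bm{k}}\in L^\infty(\mathbb{T}^d)$, and let $C$ be a conjugation on $H^2(\mathbb{D}^d)$ with canonical factorization $C=UJ_{H^2(\mathbb{D}^d)}$ ($U$ unitary). For $\bm{k}\in\mathbb{Z}_+^d$ put $\tilde z^{\bm{k}}:=Cz^{\bm{k}}=Uz^{\bm{k}}$. The following are equivalent: (1) $T_\varphi$ is $C$-symmetric; (2) $\varphi_{\bm{k}-\bm{l}}=\langle T_\varphi\tilde z^{\bm{k}},\tilde z^{\bm{l}}\rangle$ for all $\bm{k},\bm{l}\in\mathbb{Z}_+^d$; (3) $\varphi_{\bm{k}-\bm{l}}=\langle U^*T_\varphi Uz^{\bm{k}},z^{\bm{l}}\rangle$ for all $\bm{k},\bm{l}\in\mathbb{Z}_+^d$.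
   Context: A conjugation is an anti-linear, involutive ($C^2=I$), isometric map on a Hilbert space; $T$ is $C$-symmetric if $CT^*C=T$. $H^2(\mathbb{D}^d)$ is the Hardy space over the unit polydisc $\mathbb{D}^d$, identified with the closed subspace of $L^2(\mathbb{T}^d)$ spanned by the monomials $z^{\bm{k}}=z_1^{k_1}\cdots z_d^{k_d}$, $\bm{k}\in\mathbb{Z}_+^d$, which form its canonical orthonormal basis; inner products are linear in the first entry. For $\varphi\in L^\infty(\mathbb{T}^d)$, $T_\varphi f=P_{H^2(\mathbb{D}^d)}(\varphi f)$. The canonical conjugation is $J_{H^2(\mathbb{D}^d)}(\sum_{\bm{k}}a_{\bm{k}}z^{\bm{k}})=\sum_{\bm{k}}\bar a_{\bm{k}}z^{\bm{k}}$, and the canonical factorization of a conjugation $C$ is the unique factorization $C=UJ_{H^2(\mathbb{D}^d)}$ with $U$ unitary. (In the paper, condition (2) is written as $\varphi_{\bm{k}-\bm{l}}=\tilde\varphi_{\bm{l}-\bm{k}}$ with the notation $\tilde\varphi_{\bm{l}-\bm{k}}:=\langle T_\varphi\tilde z^{\bm{k}},\tilde z^{\bm{l}}\rangle$.) *)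

theory Defs
  imports "HOL-Analysis.Analysis"
begin

text \<open>The torus T^d is parametrised by angles theta in [0, 2pi]^d (normalised Lebesgue
measure). Multi-indices in Z^d are functions 'd => int, those in Z_+^d are 'd => nat.\<close>

definition torus_box :: "(real^'d) set" where
  "torus_box = cbox 0 (\<chi> i. 2 * pi)"

definition monom_T :: "('d::finite \<Rightarrow> int) \<Rightarrow> real^'d \<Rightarrow> complex" where
  "monom_T k \<theta> = exp (\<i> * of_real (\<Sum>i\<in>UNIV. of_int (k i) * \<theta> $ i))"

definition L2_inner :: "(real^'d::finite \<Rightarrow> complex) \<Rightarrow> (real^'d \<Rightarrow> complex) \<Rightarrow> complex" where
  "L2_inner f g = (1 / (2 * pi) ^ CARD('d)) *\<^sub>R (LINT \<theta>:torus_box|lborel. f \<theta> * cnj (g \<theta>))"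

definition fourier_coeff :: "(real^'d::finite \<Rightarrow> complex) \<Rightarrow> ('d \<Rightarrow> int) \<Rightarrow> complex" where
  "fourier_coeff \<phi> k = L2_inner \<phi> (monom_T k)"

definition Linfty_T :: "(real^'d::finite \<Rightarrow> complex) \<Rightarrow> bool" where
  "Linfty_T \<phi> \<longleftrightarrow> \<phi> \<in> borel_measurable lborel \<and>
     (\<exists>B. AE \<theta> in lborel. \<theta> \<in> torus_box \<longrightarrow> cmod (\<phi> \<theta>) \<le> B)"

text \<open>H^2(D^d), identified (through its canonical orthonormal basis z^k, k in Z_+^d) with
  the square-summable coefficient families a = (a_k).\<close>
definition H2 :: "(('d::finite \<Rightarrow> nat) \<Rightarrow> complex) set" where
  "H2 = {a. (\<lambda>k. (cmod (a k))\<^sup>2) summable_on UNIV}"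

definition H2_inner :: "(('d::finite \<Rightarrow> nat) \<Rightarrow> complex) \<Rightarrow> (('d \<Rightarrow> nat) \<Rightarrow> complex) \<Rightarrow> complex" where
  "H2_inner a b = (\<Sum>\<^sub>\<infinity>k. a k * cnj (b k))"

definition H2_norm :: "(('d::finite \<Rightarrow> nat) \<Rightarrow> complex) \<Rightarrow> real" where
  "H2_norm a = sqrt (\<Sum>\<^sub>\<infinity>k. (cmod (a k))\<^sup>2)"

definition H2_monom :: "('d::finite \<Rightarrow> nat) \<Rightarrow> (('d \<Rightarrow> nat) \<Rightarrow> complex)" where
  "H2_monom k = (\<lambda>j. if j = k then 1 else 0)"

definition J_H2 :: "(('d::finite \<Rightarrow> nat) \<Rightarrow> complex) \<Rightarrow> (('d \<Rightarrow> nat) \<Rightarrow> complex)" where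
  "J_H2 a = (\<lambda>k. cnj (a k))"

text \<open>Toeplitz operator T_phi f = P(phi f), in coordinates:
  (T_phi f)_l = <phi f, z^l> = sum_k a_k <phi z^k, z^l>.\<close>
definition toeplitz :: "(real^'d::finite \<Rightarrow> complex) \<Rightarrow> (('d \<Rightarrow> nat) \<Rightarrow> complex) \<Rightarrow> (('d \<Rightarrow> nat) \<Rightarrow> complex)" where
  "toeplitz \<phi> a = (\<lambda>l. \<Sum>\<^sub>\<infinity>k. a k *
      L2_inner (\<lambda>\<theta>. \<phi> \<theta> * monom_T (\<lambda>i. int (k i)) \<theta>) (monom_T (\<lambda>i. int (l i))))"

definition H2_adj :: "((('d::finite \<Rightarrow> nat) \<Rightarrow> complex) \<Rightarrow> (('d \<Rightarrow> nat) \<Rightarrow> complex))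
    \<Rightarrow> (('d \<Rightarrow> nat) \<Rightarrow> complex) \<Rightarrow> (('d \<Rightarrow> nat) \<Rightarrow> complex)" where
  "H2_adj T y = (THE z. z \<in> H2 \<and> (\<forall>x\<in>H2. H2_inner (T x) y = H2_inner x z))"

definition is_conjugation :: "((('d::finite \<Rightarrow> nat) \<Rightarrow> complex) \<Rightarrow> (('d \<Rightarrow> nat) \<Rightarrow> complex)) \<Rightarrow> bool" where
  "is_conjugation C \<longleftrightarrow>
     (\<forall>a\<in>H2. C a \<in> H2) \<and>
     (\<forall>a\<in>H2. \<forall>b\<in>H2. C (\<lambda>k. a k + b k) = (\<lambda>k. C a k + C b k)) \<and>
     (\<forall>a\<in>H2. \<forall>c. C (\<lambda>k. c * a k) = (\<lambda>k. cnj c * C a k)) \<and>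
     (\<forall>a\<in>H2. C (C a) = a) \<and>
     (\<forall>a\<in>H2. H2_norm (C a) = H2_norm a)"

definition C_symmetric :: "((('d::finite \<Rightarrow> nat) \<Rightarrow> complex) \<Rightarrow> (('d \<Rightarrow> nat) \<Rightarrow> complex))
    \<Rightarrow> ((('d \<Rightarrow> nat) \<Rightarrow> complex) \<Rightarrow> (('d \<Rightarrow> nat) \<Rightarrow> complex)) \<Rightarrow> bool" where
  "C_symmetric C T \<longleftrightarrow> (\<forall>a\<in>H2. C (H2_adj T (C a)) = T a)"

text \<open>Unitary factor of the canonical factorization C = U J, i.e. U = C J (as J^2 = I).\<close>
definition canon_unitary :: "((('d::finite \<Rightarrow> nat) \<Rightarrow> complex) \<Rightarrow> (('d \<Rightarrow> nat) \<Rightarrow> complex))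
    \<Rightarrow> (('d \<Rightarrow> nat) \<Rightarrow> complex) \<Rightarrow> (('d \<Rightarrow> nat) \<Rightarrow> complex)" where
  "canon_unitary C = (\<lambda>a. C (J_H2 a))"

end

theory Submission
  imports Defs
begin

text \<open>The Toeplitz operator T acts on coefficient families through its matrix
  t k l = <phi z^k, z^l> = phi_(l-k). Expanding trigonometric polynomials in the orthonormal
  monomials shows that this matrix is bounded by the essential supremum of phi, so T is a
  bounded operator on H^2 and has an adjoint.

  A conjugation satisfies <C a, C b> = <b, a>. Testing against the monomials, the identity
  C T^* C = T is then equivalent to <T z^l, z^k> = <T C z^k, C z^l> for all k, l, which is
  condition (2). Since U = C J agrees with C on the monomials and U^* = J C, also
  <U^* T U z^k, z^l> = <T C z^k, C z^l>, which gives condition (3).\<close>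

section \<open>Square-summable coefficient families\<close>

lemma has_sum_sum:
  fixes f :: "'i \<Rightarrow> 'a \<Rightarrow> 'b::topological_comm_monoid_add"
  assumes "finite I" "\<And>i. i \<in> I \<Longrightarrow> (f i has_sum s i) A"
  shows "((\<lambda>x. \<Sum>i\<in>I. f i x) has_sum (\<Sum>i\<in>I. s i)) A"
  using assms by (induction I rule: finite_induct) (auto intro: has_sum_add)

lemma infsum_sum:
  fixes f :: "'i \<Rightarrow> 'a \<Rightarrow> 'b::{topological_comm_monoid_add, t2_space}"
  assumes "finite I" "\<And>i. i \<in> I \<Longrightarrow> f i summable_on A"
  shows "(\<lambda>x. \<Sum>i\<in>I. f i x) summable_on A" and "(\<Sum>\<^sub>\<infinity>x\<in>A. \<Sum>i\<in>I. f i x) = (\<Sum>i\<in>I. infsum (f i) A)"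
  using has_sum_sum[where s="\<lambda>i. infsum (f i) A"] assms
  by (auto simp: has_sum_iff)

lemma norm_infsum_le_if_finite_sums:
  fixes f :: "'a \<Rightarrow> 'b::real_normed_vector"
  assumes "f summable_on A" and "\<And>F. finite F \<Longrightarrow> F \<subseteq> A \<Longrightarrow> norm (sum f F) \<le> K"
  shows "norm (infsum f A) \<le> K"
proof (rule field_le_epsilon)
  fix e :: real assume "0 < e"
  then obtain F where F: "finite F" "F \<subseteq> A" "dist (sum f F) (infsum f A) \<le> e"
    using infsum_finite_approximation[OF assms(1)] by blast
  have "norm (infsum f A) \<le> norm (sum f F) + dist (sum f F) (infsum f A)"
    by (metis dist_commute dist_norm norm_triangle_sub)
  then show "norm (infsum f A) \<le> K + e"
    using assms(2)[OF F(1,2)] F(3) by linarith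
qed

lemma sum_mult_cnj: "(\<Sum>k\<in>F. a k * cnj (a k)) = of_real (\<Sum>k\<in>F. (cmod (a k))\<^sup>2)"
  by (simp add: complex_norm_square[unfolded of_real_power])

lemma norm_sum_mult_cnj: "cmod (\<Sum>k\<in>F. a k * cnj (a k)) = (\<Sum>k\<in>F. (cmod (a k))\<^sup>2)"
  unfolding sum_mult_cnj norm_of_real by (simp add: sum_nonneg)

definition truncate :: "'i set \<Rightarrow> ('i \<Rightarrow> complex) \<Rightarrow> 'i \<Rightarrow> complex" where
  "truncate F a = (\<lambda>k. if k \<in> F then a k else 0)"

lemma H2_norm_nonneg: "H2_norm a \<ge> 0"
  by (simp add: H2_norm_def infsum_nonneg)

lemma H2_norm_power2: "(H2_norm a)\<^sup>2 = (\<Sum>\<^sub>\<infinity>k. (cmod (a k))\<^sup>2)"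
  by (simp add: H2_norm_def infsum_nonneg)

lemma H2_summable_norm_power2: "a \<in> H2 \<Longrightarrow> (\<lambda>k. (cmod (a k))\<^sup>2) summable_on UNIV"
  by (simp add: H2_def)

lemma sqrt_sum_le_H2_norm: "a \<in> H2 \<Longrightarrow> finite F \<Longrightarrow> sqrt (\<Sum>k\<in>F. (cmod (a k))\<^sup>2) \<le> H2_norm a"
  unfolding H2_norm_def by (intro real_sqrt_le_mono finite_sum_le_infsum H2_summable_norm_power2) auto

lemma abs_summable_H2_inner:
  assumes "a \<in> H2" "b \<in> H2"
  shows "(\<lambda>k. norm (a k * cnj (b k))) summable_on UNIV"
proof (rule abs_summable_product)
  show "(\<lambda>k. norm (a k * a k)) summable_on UNIV"
    using H2_summable_norm_power2[OF assms(1)] by (simp add: norm_mult power2_eq_square)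
  show "(\<lambda>k. norm (cnj (b k) * cnj (b k))) summable_on UNIV"
    using H2_summable_norm_power2[OF assms(2)] by (simp add: norm_mult power2_eq_square)
qed

lemma summable_H2_inner: "a \<in> H2 \<Longrightarrow> b \<in> H2 \<Longrightarrow> (\<lambda>k. a k * cnj (b k)) summable_on UNIV"
  by (rule abs_summable_summable[OF abs_summable_H2_inner])

lemma H2_finite_support:
  assumes "finite F" "\<And>k. k \<notin> F \<Longrightarrow> a k = 0"
  shows "a \<in> H2"
proof -
  have "(\<lambda>k. (cmod (a k))\<^sup>2) summable_on UNIV \<longleftrightarrow> (\<lambda>k. (cmod (a k))\<^sup>2) summable_on F"
    by (rule summable_on_cong_neutral) (use assms in auto)
  then show ?thesis using assms by (simp add: H2_def)
qed

lemma H2_monom_in_H2: "H2_monom k \<in> H2"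
  by (rule H2_finite_support[of "{k}"]) (auto simp: H2_monom_def)

lemma truncate_in_H2: "finite F \<Longrightarrow> truncate F a \<in> H2"
  by (rule H2_finite_support[of F]) (auto simp: truncate_def)

lemma H2_add:
  assumes "a \<in> H2" "b \<in> H2"
  shows "(\<lambda>k. a k + b k) \<in> H2"
proof -
  have "(cmod (a k + b k))\<^sup>2 \<le> 2 * (cmod (a k))\<^sup>2 + 2 * (cmod (b k))\<^sup>2" for k
  proof -
    have "(cmod (a k + b k))\<^sup>2 \<le> (cmod (a k) + cmod (b k))\<^sup>2"
      by (intro power_mono norm_triangle_ineq) simp
    also have "\<dots> \<le> 2 * (cmod (a k))\<^sup>2 + 2 * (cmod (b k))\<^sup>2"
      using sum_squares_bound[of "cmod (a k)" "cmod (b k)"] by (simp add: power2_sum)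
    finally show ?thesis .
  qed
  moreover have "(\<lambda>k. 2 * (cmod (a k))\<^sup>2 + 2 * (cmod (b k))\<^sup>2) summable_on UNIV"
    using assms by (intro summable_on_add summable_on_cmult_right H2_summable_norm_power2)
  ultimately show ?thesis
    unfolding H2_def by (auto intro: summable_on_comparison_test)
qed

lemma H2_scale: "a \<in> H2 \<Longrightarrow> (\<lambda>k. c * a k) \<in> H2"
  using summable_on_cmult_right[OF H2_summable_norm_power2, of a "(cmod c)\<^sup>2"]
  by (simp add: H2_def norm_mult power_mult_distrib)

lemma H2_diff: "a \<in> H2 \<Longrightarrow> b \<in> H2 \<Longrightarrow> (\<lambda>k. a k - b k) \<in> H2"
  using H2_add[OF _ H2_scale, of a b "-1"] by simp

lemma J_H2_in_H2: "a \<in> H2 \<Longrightarrow> J_H2 a \<in> H2"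
  by (simp add: H2_def J_H2_def)

lemma H2_inner_add_left:
  assumes "a \<in> H2" "b \<in> H2" "c \<in> H2"
  shows "H2_inner (\<lambda>k. a k + b k) c = H2_inner a c + H2_inner b c"
  unfolding H2_inner_def
  by (subst infsum_add[symmetric]) (auto simp: algebra_simps intro: summable_H2_inner assms)

lemma H2_inner_scale_left: "H2_inner (\<lambda>k. s * a k) b = s * H2_inner a b"
  unfolding H2_inner_def by (simp add: mult.assoc infsum_cmult_right')

lemma H2_inner_commute: "H2_inner b a = cnj (H2_inner a b)"
  unfolding H2_inner_def infsum_cnj[symmetric] by (simp add: mult.commute)

lemma H2_inner_add_right:
  assumes "a \<in> H2" "b \<in> H2" "c \<in> H2"
  shows "H2_inner c (\<lambda>k. a k + b k) = H2_inner c a + H2_inner c b"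
  using H2_inner_add_left[OF assms] by (metis H2_inner_commute complex_cnj_add)

lemma H2_inner_scale_right: "H2_inner a (\<lambda>k. s * b k) = cnj s * H2_inner a b"
  using H2_inner_scale_left[of s b a] by (metis H2_inner_commute complex_cnj_mult)

lemma H2_inner_monom_right: "H2_inner a (H2_monom k) = a k"
proof -
  have "H2_inner a (H2_monom k) = (\<Sum>\<^sub>\<infinity>j\<in>{k}. a j * cnj (H2_monom k j))"
    unfolding H2_inner_def by (rule infsum_cong_neutral) (auto simp: H2_monom_def)
  then show ?thesis by (simp add: H2_monom_def)
qed

lemma H2_inner_monom_left: "H2_inner (H2_monom k) b = cnj (b k)"
  by (metis H2_inner_commute H2_inner_monom_right)

lemma H2_eqI_inner_monom: "(\<And>k. H2_inner (H2_monom k) a = H2_inner (H2_monom k) b) \<Longrightarrow> a = b"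
  by (auto simp: H2_inner_monom_left fun_eq_iff)

lemma H2_inner_self:
  assumes "a \<in> H2"
  shows "H2_inner a a = of_real ((H2_norm a)\<^sup>2)"
proof -
  have "((\<lambda>k. complex_of_real ((cmod (a k))\<^sup>2)) has_sum of_real ((H2_norm a)\<^sup>2)) UNIV"
    unfolding H2_norm_power2 by (intro has_sum_of_real has_sum_infsum H2_summable_norm_power2 assms)
  then show ?thesis
    unfolding H2_inner_def complex_norm_square by (rule infsumI)
qed

lemma H2_inner_truncate_left: "finite F \<Longrightarrow> H2_inner (truncate F a) b = (\<Sum>k\<in>F. a k * cnj (b k))"
proof -
  assume "finite F"
  have "H2_inner (truncate F a) b = (\<Sum>\<^sub>\<infinity>k\<in>F. a k * cnj (b k))"
    unfolding H2_inner_def by (rule infsum_cong_neutral) (auto simp: truncate_def)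
  then show ?thesis using \<open>finite F\<close> by simp
qed

lemma H2_norm_truncate: "finite F \<Longrightarrow> (H2_norm (truncate F a))\<^sup>2 = (\<Sum>k\<in>F. (cmod (a k))\<^sup>2)"
proof -
  assume "finite F"
  have "(H2_norm (truncate F a))\<^sup>2 = (\<Sum>\<^sub>\<infinity>k\<in>F. (cmod (a k))\<^sup>2)"
    unfolding H2_norm_power2 by (rule infsum_cong_neutral) (auto simp: truncate_def)
  then show ?thesis using \<open>finite F\<close> by simp
qed

lemma H2_Cauchy_Schwarz:
  assumes "a \<in> H2" "b \<in> H2"
  shows "cmod (H2_inner a b) \<le> H2_norm a * H2_norm b"
proof -
  have "cmod (H2_inner a b) \<le> (\<Sum>\<^sub>\<infinity>k. cmod (a k * cnj (b k)))"
    unfolding H2_inner_def by (rule norm_infsum_bound) (rule abs_summable_H2_inner[OF assms])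
  also have "\<dots> \<le> H2_norm a * H2_norm b"
  proof (rule infsum_le_finite_sums)
    show "(\<lambda>k. cmod (a k * cnj (b k))) summable_on UNIV"
      by (rule abs_summable_H2_inner[OF assms])
    fix F :: "('a \<Rightarrow> nat) set" assume F: "finite F"
    have "(\<Sum>k\<in>F. cmod (a k * cnj (b k))) \<le> sqrt (\<Sum>k\<in>F. (cmod (a k))\<^sup>2) * sqrt (\<Sum>k\<in>F. (cmod (b k))\<^sup>2)"
      using L2_set_mult_ineq[where f="\<lambda>k. cmod (a k)" and g="\<lambda>k. cmod (b k)" and A=F] by (simp add: L2_set_def norm_mult)
    also have "\<dots> \<le> H2_norm a * H2_norm b"
      by (intro mult_mono sqrt_sum_le_H2_norm assms F H2_norm_nonneg) (simp add: sum_nonneg)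
    finally show "(\<Sum>k\<in>F. cmod (a k * cnj (b k))) \<le> H2_norm a * H2_norm b" .
  qed
  finally show ?thesis .
qed

lemma H2_norm_add_power2:
  assumes "a \<in> H2" "b \<in> H2"
  shows "(H2_norm (\<lambda>k. a k + b k))\<^sup>2 = (H2_norm a)\<^sup>2 + (H2_norm b)\<^sup>2 + 2 * Re (H2_inner a b)"
proof -
  have ab: "(\<lambda>k. a k + b k) \<in> H2" by (rule H2_add[OF assms])
  have "complex_of_real ((H2_norm (\<lambda>k. a k + b k))\<^sup>2) = H2_inner (\<lambda>k. a k + b k) (\<lambda>k. a k + b k)"
    by (rule H2_inner_self[OF ab, symmetric])
  also have "\<dots> = H2_inner a a + H2_inner b b + (H2_inner a b + cnj (H2_inner a b))"
    by (simp add: H2_inner_add_left[OF assms ab] H2_inner_add_right[OF assms] assms H2_inner_commute[of b a])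
  also have "\<dots> = of_real ((H2_norm a)\<^sup>2 + (H2_norm b)\<^sup>2 + 2 * Re (H2_inner a b))"
    by (simp add: H2_inner_self[OF assms(1)] H2_inner_self[OF assms(2)] complex_add_cnj)
  finally show ?thesis by (simp only: of_real_eq_iff)
qed

lemma H2_truncate_approx:
  assumes "a \<in> H2" "e > 0"
  obtains F where "finite F" "H2_norm (\<lambda>k. a k - truncate F a k) \<le> e"
proof -
  obtain F where F: "finite F" "dist (\<Sum>k\<in>F. (cmod (a k))\<^sup>2) ((H2_norm a)\<^sup>2) \<le> e\<^sup>2"
    using infsum_finite_approximation[OF H2_summable_norm_power2[OF assms(1)], of "e\<^sup>2"] assms(2)
    unfolding H2_norm_power2 by auto
  have "(H2_norm (\<lambda>k. a k - truncate F a k))\<^sup>2 = (\<Sum>\<^sub>\<infinity>k\<in>UNIV - F. (cmod (a k))\<^sup>2)"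
    unfolding H2_norm_power2 by (rule infsum_cong_neutral) (auto simp: truncate_def)
  also have "\<dots> = (H2_norm a)\<^sup>2 - (\<Sum>k\<in>F. (cmod (a k))\<^sup>2)"
    unfolding H2_norm_power2 using H2_summable_norm_power2[OF assms(1)] F(1)
    by (subst infsum_Diff) auto
  also have "\<dots> \<le> e\<^sup>2" using F(2) by (simp add: dist_real_def)
  finally have "H2_norm (\<lambda>k. a k - truncate F a k) \<le> e"
    by (rule power2_le_imp_le) (use assms(2) in simp)
  with F(1) show ?thesis by (rule that)
qed

lemma H2_norm_le_if_finite_sums:
  assumes "K \<ge> 0" and "\<And>F. finite F \<Longrightarrow> (\<Sum>k\<in>F. (cmod (a k))\<^sup>2) \<le> K * sqrt (\<Sum>k\<in>F. (cmod (a k))\<^sup>2)"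
  shows "a \<in> H2" and "H2_norm a \<le> K"
proof -
  have bound: "(\<Sum>k\<in>F. (cmod (a k))\<^sup>2) \<le> K\<^sup>2" if "finite F" for F
  proof -
    let ?r = "sqrt (\<Sum>k\<in>F. (cmod (a k))\<^sup>2)"
    have nonneg: "(\<Sum>k\<in>F. (cmod (a k))\<^sup>2) \<ge> 0" by (simp add: sum_nonneg)
    have "?r \<le> K"
    proof (cases "?r = 0")
      case True
      with assms(1) show ?thesis by simp
    next
      case False
      then have "?r > 0" using nonneg by (simp add: less_le)
      have "?r * ?r \<le> K * ?r" using assms(2)[OF that] by (simp add: sum_nonneg)
      then show ?thesis using \<open>?r > 0\<close> by (rule mult_right_le_imp_le)
    qed
    then have "?r\<^sup>2 \<le> K\<^sup>2" using nonneg by (intro power_mono) simp_all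
    then show ?thesis using nonneg by simp
  qed
  have summable: "(\<lambda>k. (cmod (a k))\<^sup>2) summable_on UNIV"
    by (rule nonneg_bdd_above_summable_on) (use bound in \<open>auto intro!: bdd_aboveI2\<close>)
  then show "a \<in> H2" by (simp add: H2_def)
  have "(\<Sum>\<^sub>\<infinity>k. (cmod (a k))\<^sup>2) \<le> K\<^sup>2"
    by (rule infsum_le_finite_sums[OF summable]) (use bound in auto)
  then have "H2_norm a \<le> sqrt (K\<^sup>2)"
    unfolding H2_norm_def by (rule real_sqrt_le_mono)
  then show "H2_norm a \<le> K" using assms(1) by simp
qed

lemma H2_functional_eqI:
  fixes f g :: "(('d::finite \<Rightarrow> nat) \<Rightarrow> complex) \<Rightarrow> complex"
  assumes f_add: "\<And>x y. x \<in> H2 \<Longrightarrow> y \<in> H2 \<Longrightarrow> f (\<lambda>k. x k + y k) = f x + f y"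
    and g_add: "\<And>x y. x \<in> H2 \<Longrightarrow> y \<in> H2 \<Longrightarrow> g (\<lambda>k. x k + y k) = g x + g y"
    and f_bounded: "\<And>x. x \<in> H2 \<Longrightarrow> cmod (f x) \<le> K * H2_norm x"
    and g_bounded: "\<And>x. x \<in> H2 \<Longrightarrow> cmod (g x) \<le> L * H2_norm x"
    and agree: "\<And>F x. finite F \<Longrightarrow> f (truncate F x) = g (truncate F x)"
    and x: "x \<in> H2"
  shows "f x = g x"
proof -
  define K' where "K' = max K 0 + max L 0 + 1"
  have K': "K' > 0" by (simp add: K'_def)
  have bounded: "cmod (f d) + cmod (g d) \<le> 2 * K' * H2_norm d" if "d \<in> H2" for d
  proof -
    have "K * H2_norm d \<le> K' * H2_norm d" "L * H2_norm d \<le> K' * H2_norm d"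
      unfolding K'_def by (intro mult_right_mono H2_norm_nonneg; simp)+
    then show ?thesis using f_bounded[OF that] g_bounded[OF that] by simp
  qed
  have "cmod (f x - g x) \<le> 0 + e" if "e > 0" for e
  proof -
    obtain F where F: "finite F" and small: "H2_norm (\<lambda>k. x k - truncate F x k) \<le> e / (2 * K')"
      using H2_truncate_approx[OF x, of "e / (2 * K')"] K' \<open>e > 0\<close> by auto
    define d where "d = (\<lambda>k. x k - truncate F x k)"
    have d: "d \<in> H2" unfolding d_def by (rule H2_diff[OF x truncate_in_H2[OF F]])
    have "x = (\<lambda>k. truncate F x k + d k)" by (simp add: d_def)
    then have "f x - g x = f d - g d"
      using f_add[OF truncate_in_H2[OF F, of x] d] g_add[OF truncate_in_H2[OF F, of x] d] agree[OF F, of x]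
      by (simp add: d_def)
    also have "cmod \<dots> \<le> 2 * K' * H2_norm d"
      using norm_triangle_ineq4[of "f d" "g d"] bounded[OF d] by linarith
    also have "\<dots> \<le> e"
      using small K' unfolding d_def by (simp add: field_simps)
    finally show ?thesis by simp
  qed
  then have "cmod (f x - g x) \<le> 0" by (rule field_le_epsilon)
  then show ?thesis by simp
qed

section \<open>Operators given by bounded matrices\<close>

definition has_H2_adjoint :: "((('d::finite \<Rightarrow> nat) \<Rightarrow> complex) \<Rightarrow> (('d \<Rightarrow> nat) \<Rightarrow> complex)) \<Rightarrow> bool" where
  "has_H2_adjoint T \<longleftrightarrow> (\<forall>y\<in>H2. \<exists>z\<in>H2. \<forall>x\<in>H2. H2_inner (T x) y = H2_inner x z)"

lemma H2_adj_eqI: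
  assumes "z \<in> H2" and "\<And>x. x \<in> H2 \<Longrightarrow> H2_inner (T x) y = H2_inner x z"
  shows "H2_adj T y = z"
  unfolding H2_adj_def
proof (rule the_equality)
  fix w assume w: "w \<in> H2 \<and> (\<forall>x\<in>H2. H2_inner (T x) y = H2_inner x w)"
  show "w = z"
  proof (rule H2_eqI_inner_monom)
    fix k
    show "H2_inner (H2_monom k) w = H2_inner (H2_monom k) z"
      using w assms(2)[OF H2_monom_in_H2] H2_monom_in_H2 by metis
  qed
qed (use assms in auto)

lemma H2_adj:
  assumes "has_H2_adjoint T" and "y \<in> H2"
  shows "H2_adj T y \<in> H2" and "\<And>x. x \<in> H2 \<Longrightarrow> H2_inner (T x) y = H2_inner x (H2_adj T y)"
proof -
  obtain z where z: "z \<in> H2" "\<And>x. x \<in> H2 \<Longrightarrow> H2_inner (T x) y = H2_inner x z"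
    using assms unfolding has_H2_adjoint_def by blast
  then have "H2_adj T y = z" by (rule H2_adj_eqI)
  with z show "H2_adj T y \<in> H2" "\<And>x. x \<in> H2 \<Longrightarrow> H2_inner (T x) y = H2_inner x (H2_adj T y)"
    by simp_all
qed

definition matrix_op :: "(('d::finite \<Rightarrow> nat) \<Rightarrow> ('d \<Rightarrow> nat) \<Rightarrow> complex)
    \<Rightarrow> (('d \<Rightarrow> nat) \<Rightarrow> complex) \<Rightarrow> ('d \<Rightarrow> nat) \<Rightarrow> complex" where
  "matrix_op t a = (\<lambda>l. \<Sum>\<^sub>\<infinity>k. a k * t k l)"

lemma matrix_op_monom: "matrix_op t (H2_monom k) = t k"
proof
  fix l
  have "matrix_op t (H2_monom k) l = (\<Sum>\<^sub>\<infinity>j\<in>{k}. H2_monom k j * t j l)"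
    unfolding matrix_op_def by (rule infsum_cong_neutral) (auto simp: H2_monom_def)
  then show "matrix_op t (H2_monom k) l = t k l" by (simp add: H2_monom_def)
qed

lemma matrix_op_truncate: "finite F \<Longrightarrow> matrix_op t (truncate F a) = (\<lambda>l. \<Sum>k\<in>F. a k * t k l)"
proof
  fix l assume "finite F"
  have "matrix_op t (truncate F a) l = (\<Sum>\<^sub>\<infinity>k\<in>F. a k * t k l)"
    unfolding matrix_op_def by (rule infsum_cong_neutral) (auto simp: truncate_def)
  then show "matrix_op t (truncate F a) l = (\<Sum>k\<in>F. a k * t k l)" using \<open>finite F\<close> by simp
qed

locale bounded_matrix =
  fixes t :: "('d::finite \<Rightarrow> nat) \<Rightarrow> ('d \<Rightarrow> nat) \<Rightarrow> complex" and M :: real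
  assumes bilinear_bound: "\<And>F G a b. finite F \<Longrightarrow> finite G \<Longrightarrow>
      cmod (\<Sum>k\<in>F. \<Sum>l\<in>G. a k * cnj (b l) * t k l)
        \<le> M * sqrt (\<Sum>k\<in>F. (cmod (a k))\<^sup>2) * sqrt (\<Sum>l\<in>G. (cmod (b l))\<^sup>2)"
begin

lemma bound_nonneg: "M \<ge> 0"
proof -
  have "cmod (t k l) \<le> M" for k l
    using bilinear_bound[of "{k}" "{l}" "\<lambda>_. 1" "\<lambda>_. 1"] by simp
  then show ?thesis by (rule order_trans[OF norm_ge_zero])
qed

lemma column_in_H2: "(\<lambda>k. cnj (t k l)) \<in> H2"
proof (rule H2_norm_le_if_finite_sums(1)[OF bound_nonneg])
  fix F :: "('d \<Rightarrow> nat) set" assume "finite F"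
  then show "(\<Sum>k\<in>F. (cmod (cnj (t k l)))\<^sup>2) \<le> M * sqrt (\<Sum>k\<in>F. (cmod (cnj (t k l)))\<^sup>2)"
    using bilinear_bound[of F "{l}" "\<lambda>k. cnj (t k l)" "\<lambda>_. 1"] norm_sum_mult_cnj[of "\<lambda>k. cnj (t k l)" F]
    by simp
qed

lemma summable_matrix_op: "a \<in> H2 \<Longrightarrow> (\<lambda>k. a k * t k l) summable_on UNIV"
  using summable_H2_inner[OF _ column_in_H2, of a l] by simp

lemma matrix_op_in_H2: "a \<in> H2 \<Longrightarrow> matrix_op t a \<in> H2"
  and norm_matrix_op_le: "a \<in> H2 \<Longrightarrow> H2_norm (matrix_op t a) \<le> M * H2_norm a"
proof -
  assume a: "a \<in> H2"
  let ?b = "matrix_op t a"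
  have "(\<Sum>l\<in>G. (cmod (?b l))\<^sup>2) \<le> M * H2_norm a * sqrt (\<Sum>l\<in>G. (cmod (?b l))\<^sup>2)" if G: "finite G" for G
  proof -
    have summable: "(\<lambda>k. a k * cnj (?b l) * t k l) summable_on UNIV" for l
      using summable_on_cmult_right[OF summable_matrix_op[OF a, of l], of "cnj (?b l)"]
      by (simp add: mult_ac)
    have "?b l * cnj (?b l) = (\<Sum>\<^sub>\<infinity>k. a k * cnj (?b l) * t k l)" for l
      by (simp add: matrix_op_def[of t a] infsum_cmult_left'[symmetric] mult_ac)
    then have "(\<Sum>l\<in>G. (cmod (?b l))\<^sup>2) = cmod (\<Sum>l\<in>G. \<Sum>\<^sub>\<infinity>k. a k * cnj (?b l) * t k l)"
      by (simp flip: norm_sum_mult_cnj)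
    also have "\<dots> = cmod (\<Sum>\<^sub>\<infinity>k. \<Sum>l\<in>G. a k * cnj (?b l) * t k l)"
      using infsum_sum(2)[OF G summable] by simp
    also have "\<dots> \<le> M * H2_norm a * sqrt (\<Sum>l\<in>G. (cmod (?b l))\<^sup>2)"
    proof (rule norm_infsum_le_if_finite_sums)
      show "(\<lambda>k. \<Sum>l\<in>G. a k * cnj (?b l) * t k l) summable_on UNIV"
        using infsum_sum(1)[OF G summable] .
      fix F :: "('d \<Rightarrow> nat) set" assume F: "finite F"
      have "sqrt (\<Sum>k\<in>F. (cmod (a k))\<^sup>2) \<le> H2_norm a"
        by (rule sqrt_sum_le_H2_norm[OF a F])
      then have "M * sqrt (\<Sum>k\<in>F. (cmod (a k))\<^sup>2) * sqrt (\<Sum>l\<in>G. (cmod (?b l))\<^sup>2)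
          \<le> M * H2_norm a * sqrt (\<Sum>l\<in>G. (cmod (?b l))\<^sup>2)"
        by (intro mult_right_mono mult_left_mono bound_nonneg) (simp_all add: sum_nonneg)
      with bilinear_bound[OF F G, of a "?b"]
      show "cmod (\<Sum>k\<in>F. \<Sum>l\<in>G. a k * cnj (?b l) * t k l) \<le> M * H2_norm a * sqrt (\<Sum>l\<in>G. (cmod (?b l))\<^sup>2)"
        by (rule order_trans)
    qed
    finally show ?thesis .
  qed
  then show "?b \<in> H2" "H2_norm ?b \<le> M * H2_norm a"
    using H2_norm_le_if_finite_sums[of "M * H2_norm a" ?b] bound_nonneg H2_norm_nonneg[of a] by auto
qed

lemma matrix_op_add: "a \<in> H2 \<Longrightarrow> b \<in> H2 \<Longrightarrow> matrix_op t (\<lambda>k. a k + b k) = (\<lambda>l. matrix_op t a l + matrix_op t b l)"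
  unfolding matrix_op_def
  by (rule ext, subst infsum_add[symmetric]) (auto simp: algebra_simps intro: summable_matrix_op)

lemma H2_inner_matrix_op_truncate:
  assumes F: "finite F" and y: "y \<in> H2"
  shows "H2_inner (matrix_op t (truncate F a)) y = (\<Sum>k\<in>F. a k * H2_inner (t k) y)"
proof -
  have row: "(\<lambda>l. a k * (t k l * cnj (y l))) summable_on UNIV" for k
    using summable_H2_inner[OF matrix_op_in_H2[OF H2_monom_in_H2] y, of k]
    by (simp add: matrix_op_monom summable_on_cmult_right)
  have "H2_inner (matrix_op t (truncate F a)) y = (\<Sum>\<^sub>\<infinity>l. \<Sum>k\<in>F. a k * (t k l * cnj (y l)))"
    unfolding H2_inner_def matrix_op_truncate[OF F] sum_distrib_right by (simp add: mult_ac)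
  also have "\<dots> = (\<Sum>k\<in>F. a k * H2_inner (t k) y)"
    using infsum_sum(2)[OF F row] by (simp add: infsum_cmult_right' H2_inner_def)
  finally show ?thesis .
qed

text \<open>The adjoint is the conjugate transpose of t. The double series need not converge
  absolutely, so the adjoint identity is proved on finitely supported vectors and extended by
  continuity.\<close>
lemma has_H2_adjoint_matrix_op: "has_H2_adjoint (matrix_op t)"
  unfolding has_H2_adjoint_def
proof
  fix y :: "('d \<Rightarrow> nat) \<Rightarrow> complex" assume y: "y \<in> H2"
  define z where "z k = cnj (H2_inner (t k) y)" for k
  have on_truncations: "H2_inner (matrix_op t (truncate F x)) y = H2_inner (truncate F x) z"
    if F: "finite F" for F x
    by (simp add: H2_inner_matrix_op_truncate[OF F y] H2_inner_truncate_left[OF F] z_def)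
  have z_bound: "(\<Sum>k\<in>F. (cmod (z k))\<^sup>2) \<le> M * H2_norm y * sqrt (\<Sum>k\<in>F. (cmod (z k))\<^sup>2)"
    if F: "finite F" for F
  proof -
    have "(\<Sum>k\<in>F. (cmod (z k))\<^sup>2) = cmod (H2_inner (matrix_op t (truncate F z)) y)"
      by (simp add: H2_inner_matrix_op_truncate[OF F y] z_def mult.commute flip: norm_sum_mult_cnj)
    also have "\<dots> \<le> M * H2_norm (truncate F z) * H2_norm y"
      using H2_Cauchy_Schwarz[OF matrix_op_in_H2 y] norm_matrix_op_le H2_norm_nonneg[of y]
        truncate_in_H2[OF F]
      by (meson mult_right_mono order_trans)
    also have "\<dots> = M * H2_norm y * sqrt (\<Sum>k\<in>F. (cmod (z k))\<^sup>2)"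
      using H2_norm_truncate[OF F, of z] H2_norm_nonneg[of "truncate F z"]
      by (metis mult.commute mult.left_commute real_sqrt_unique)
    finally show ?thesis .
  qed
  have z: "z \<in> H2"
    using H2_norm_le_if_finite_sums(1)[OF _ z_bound] bound_nonneg H2_norm_nonneg[of y] by auto
  have "H2_inner (matrix_op t x) y = H2_inner x z" if x: "x \<in> H2" for x
  proof (rule H2_functional_eqI[where f = "\<lambda>x. H2_inner (matrix_op t x) y" and g = "\<lambda>x. H2_inner x z"
        and K = "M * H2_norm y" and L = "H2_norm z"])
    fix x :: "('d \<Rightarrow> nat) \<Rightarrow> complex" assume x: "x \<in> H2"
    have "cmod (H2_inner (matrix_op t x) y) \<le> H2_norm (matrix_op t x) * H2_norm y"
      by (rule H2_Cauchy_Schwarz[OF matrix_op_in_H2[OF x] y])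
    also have "\<dots> \<le> M * H2_norm x * H2_norm y"
      by (intro mult_right_mono norm_matrix_op_le x H2_norm_nonneg)
    finally show "cmod (H2_inner (matrix_op t x) y) \<le> M * H2_norm y * H2_norm x"
      by (simp add: mult_ac)
    show "cmod (H2_inner x z) \<le> H2_norm z * H2_norm x"
      using H2_Cauchy_Schwarz[OF x z] by (simp add: mult.commute)
  qed (use x y z on_truncations in \<open>auto simp: matrix_op_add H2_inner_add_left matrix_op_in_H2\<close>)
  with z show "\<exists>z\<in>H2. \<forall>x\<in>H2. H2_inner (matrix_op t x) y = H2_inner x z" by blast
qed

end

section \<open>Conjugations\<close>

context
  fixes C :: "(('d::finite \<Rightarrow> nat) \<Rightarrow> complex) \<Rightarrow> (('d \<Rightarrow> nat) \<Rightarrow> complex)"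
  assumes C: "is_conjugation C"
begin

lemma conjugation_in_H2: "a \<in> H2 \<Longrightarrow> C a \<in> H2"
  and conjugation_add: "a \<in> H2 \<Longrightarrow> b \<in> H2 \<Longrightarrow> C (\<lambda>k. a k + b k) = (\<lambda>k. C a k + C b k)"
  and conjugation_scale: "a \<in> H2 \<Longrightarrow> C (\<lambda>k. c * a k) = (\<lambda>k. cnj c * C a k)"
  and conjugation_involutive: "a \<in> H2 \<Longrightarrow> C (C a) = a"
  and conjugation_norm: "a \<in> H2 \<Longrightarrow> H2_norm (C a) = H2_norm a"
  using C by (simp_all add: is_conjugation_def)

text \<open>By polarization the isometry C preserves the real part of the inner product; applied to
  i b, antilinearity turns this into the reversal of the imaginary part.\<close>
lemma conjugation_inner:
  assumes a: "a \<in> H2" and b: "b \<in> H2"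
  shows "H2_inner (C a) (C b) = H2_inner b a"
proof -
  have Re_eq: "Re (H2_inner (C a) (C c)) = Re (H2_inner a c)" if c: "c \<in> H2" for c
  proof -
    have "(H2_norm (\<lambda>k. C a k + C c k))\<^sup>2 = (H2_norm (\<lambda>k. a k + c k))\<^sup>2"
      using conjugation_add[OF a c] conjugation_norm[OF H2_add[OF a c]] by simp
    then show ?thesis
      using H2_norm_add_power2[OF conjugation_in_H2[OF a] conjugation_in_H2[OF c]] H2_norm_add_power2[OF a c]
        conjugation_norm[OF a] conjugation_norm[OF c] by simp
  qed
  have "H2_inner (C a) (C (\<lambda>k. \<i> * b k)) = \<i> * H2_inner (C a) (C b)"
    by (simp only: conjugation_scale[OF b] H2_inner_scale_right complex_cnj_cnj)
  moreover have "H2_inner a (\<lambda>k. \<i> * b k) = cnj \<i> * H2_inner a b"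
    by (rule H2_inner_scale_right)
  ultimately have Im_eq: "Im (H2_inner (C a) (C b)) = - Im (H2_inner a b)"
    using Re_eq[OF H2_scale[OF b], of \<i>] by simp
  show ?thesis
    using Re_eq[OF b] Im_eq by (simp add: complex_eq_iff H2_inner_commute[of b a])
qed

lemma conjugation_inner_left: "a \<in> H2 \<Longrightarrow> b \<in> H2 \<Longrightarrow> H2_inner (C a) b = H2_inner (C b) a"
  using conjugation_inner[OF _ conjugation_in_H2] conjugation_involutive by metis

lemma conjugation_inner_right: "a \<in> H2 \<Longrightarrow> b \<in> H2 \<Longrightarrow> H2_inner a (C b) = H2_inner b (C a)"
  using conjugation_inner[OF conjugation_in_H2] conjugation_involutive by metis

lemma canon_unitary_monom: "canon_unitary C (H2_monom k) = C (H2_monom k)"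
proof -
  have "J_H2 (H2_monom k) = H2_monom k" by (auto simp: J_H2_def H2_monom_def)
  then show ?thesis by (simp add: canon_unitary_def)
qed

lemma H2_adj_canon_unitary:
  assumes w: "w \<in> H2"
  shows "H2_adj (canon_unitary C) w = J_H2 (C w)"
proof (rule H2_adj_eqI)
  show "J_H2 (C w) \<in> H2" by (rule J_H2_in_H2[OF conjugation_in_H2[OF w]])
  fix x :: "('d \<Rightarrow> nat) \<Rightarrow> complex" assume x: "x \<in> H2"
  have "H2_inner (canon_unitary C x) w = H2_inner (C w) (J_H2 x)"
    unfolding canon_unitary_def by (rule conjugation_inner_left[OF J_H2_in_H2[OF x] w])
  also have "\<dots> = H2_inner x (J_H2 (C w))"
    by (simp add: H2_inner_def J_H2_def mult.commute)
  finally show "H2_inner (canon_unitary C x) w = H2_inner x (J_H2 (C w))" .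
qed

lemma H2_inner_adj_canon_unitary_monom:
  assumes "w \<in> H2"
  shows "H2_inner (H2_adj (canon_unitary C) w) (H2_monom l) = H2_inner w (C (H2_monom l))"
proof -
  have "H2_inner (H2_adj (canon_unitary C) w) (H2_monom l) = cnj (H2_inner (C w) (H2_monom l))"
    by (simp add: H2_adj_canon_unitary[OF assms] H2_inner_monom_right J_H2_def)
  also have "\<dots> = H2_inner w (C (H2_monom l))"
    by (simp add: conjugation_inner_left[OF assms H2_monom_in_H2] H2_inner_commute[of w])
  finally show ?thesis .
qed

lemma C_symmetric_iff_monom:
  fixes T :: "(('d \<Rightarrow> nat) \<Rightarrow> complex) \<Rightarrow> (('d \<Rightarrow> nat) \<Rightarrow> complex)"
  assumes T: "\<And>x. x \<in> H2 \<Longrightarrow> T x \<in> H2" and adj: "has_H2_adjoint T"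
  shows "C_symmetric C T \<longleftrightarrow>
    (\<forall>k l. H2_inner (T (H2_monom l)) (H2_monom k) = H2_inner (T (C (H2_monom k))) (C (H2_monom l)))"
    (is "_ \<longleftrightarrow> (\<forall>k l. ?entry l k)")
proof
  let ?e = "H2_monom"
  have Ce: "C (?e k) \<in> H2" for k by (rule conjugation_in_H2[OF H2_monom_in_H2])
  note adj_in = H2_adj(1)[OF adj] and adj_inner = H2_adj(2)[OF adj]
  assume sym: "C_symmetric C T"
  show "\<forall>k l. ?entry l k"
  proof (intro allI)
    fix k l
    have "C (H2_adj T (C (?e l))) = T (?e l)"
      using sym H2_monom_in_H2 unfolding C_symmetric_def by blast
    then have "H2_inner (T (?e l)) (?e k) = H2_inner (C (H2_adj T (C (?e l)))) (?e k)"
      by simp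
    also have "\<dots> = H2_inner (C (?e k)) (H2_adj T (C (?e l)))"
      by (rule conjugation_inner_left[OF adj_in[OF Ce] H2_monom_in_H2])
    also have "\<dots> = H2_inner (T (C (?e k))) (C (?e l))"
      by (rule adj_inner[OF Ce Ce, symmetric])
    finally show "?entry l k" .
  qed
next
  let ?e = "H2_monom"
  have Ce: "C (?e k) \<in> H2" for k by (rule conjugation_in_H2[OF H2_monom_in_H2])
  note adj_in = H2_adj(1)[OF adj] and adj_inner = H2_adj(2)[OF adj]
  assume entries: "\<forall>k l. ?entry l k"
  have adj_monom: "H2_adj T (?e k) = C (T (C (?e k)))" for k
  proof (rule H2_eqI_inner_monom)
    fix l
    have "H2_inner (?e l) (H2_adj T (?e k)) = H2_inner (T (?e l)) (?e k)"
      by (rule adj_inner[OF H2_monom_in_H2 H2_monom_in_H2, symmetric])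
    also have "\<dots> = H2_inner (T (C (?e k))) (C (?e l))"
      using entries by blast
    also have "\<dots> = H2_inner (?e l) (C (T (C (?e k))))"
      by (rule conjugation_inner_right[OF H2_monom_in_H2 T[OF Ce], symmetric])
    finally show "H2_inner (?e l) (H2_adj T (?e k)) = H2_inner (?e l) (C (T (C (?e k))))" .
  qed
  show "C_symmetric C T"
    unfolding C_symmetric_def
  proof (intro ballI H2_eqI_inner_monom)
    fix x :: "('d \<Rightarrow> nat) \<Rightarrow> complex" and k :: "'d \<Rightarrow> nat"
    assume x: "x \<in> H2"
    have Cx: "C x \<in> H2" by (rule conjugation_in_H2[OF x])
    have "H2_inner (?e k) (C (H2_adj T (C x))) = H2_inner (H2_adj T (C x)) (C (?e k))"
      by (rule conjugation_inner_right[OF H2_monom_in_H2 adj_in[OF Cx]])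
    also have "\<dots> = cnj (H2_inner (T (C (?e k))) (C x))"
      by (simp add: adj_inner[OF Cx Ce] H2_inner_commute[of "C (?e k)"])
    also have "\<dots> = cnj (H2_inner x (H2_adj T (?e k)))"
      by (simp add: adj_monom conjugation_inner_right[OF T[OF Ce] x])
    also have "\<dots> = H2_inner (?e k) (T x)"
      by (simp add: adj_inner[OF H2_monom_in_H2 x, symmetric] H2_inner_commute[of "T x"])
    finally show "H2_inner (?e k) (C (H2_adj T (C x))) = H2_inner (?e k) (T x)" .
  qed
qed

end

section \<open>Monomials on the torus\<close>

lemma integral_lborel_prod:
  fixes g :: "'a::euclidean_space \<Rightarrow> real \<Rightarrow> 'b::{real_normed_field, banach, second_countable_topology}"
  assumes int: "\<And>b. b \<in> Basis \<Longrightarrow> integrable lborel (g b)"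
  shows "(\<integral>x. (\<Prod>b\<in>Basis. g b (x \<bullet> b)) \<partial>(lborel::'a measure)) = (\<Prod>b\<in>Basis. \<integral>t. g b t \<partial>lborel)"
proof -
  interpret product_sigma_finite "\<lambda>_::'a. lborel::real measure"
    by standard
  have [measurable]: "g b \<in> borel_measurable lborel" if "b \<in> Basis" for b
    using int[OF that] by auto
  have "(\<integral>x. (\<Prod>b\<in>Basis. g b (x \<bullet> b)) \<partial>(lborel::'a measure)) =
      (\<integral>f. (\<Prod>b\<in>Basis. g b ((\<Sum>b'\<in>Basis. f b' *\<^sub>R b') \<bullet> b)) \<partial>(\<Pi>\<^sub>M b\<in>Basis. lborel))"
    by (subst lborel_eq, subst integral_distr) measurable
  also have "\<dots> = (\<integral>f. (\<Prod>b\<in>Basis. g b (f b)) \<partial>(\<Pi>\<^sub>M b\<in>Basis. lborel))"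
    by (intro Bochner_Integration.integral_cong refl prod.cong)
       (simp add: inner_sum_left inner_Basis if_distrib cong: if_cong)
  also have "\<dots> = (\<Prod>b\<in>Basis. \<integral>t. g b t \<partial>lborel)"
    by (rule product_integral_prod) (auto intro: int)
  finally show ?thesis .
qed

lemma integral_lborel_prod_vec:
  fixes g :: "'n::finite \<Rightarrow> real \<Rightarrow> 'b::{real_normed_field, banach, second_countable_topology}"
  assumes "\<And>i. integrable lborel (g i)"
  shows "(\<integral>x. (\<Prod>i\<in>UNIV. g i (x $ i)) \<partial>(lborel::(real^'n) measure)) = (\<Prod>i\<in>UNIV. \<integral>t. g i t \<partial>lborel)"
proof -
  have Basis: "(Basis :: (real^'n) set) = range (\<lambda>i. axis i 1)" and inj: "inj (\<lambda>i::'n. axis i (1::real))"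
    by (auto simp: Basis_vec_def inj_on_def axis_eq_axis)
  have prod_Basis: "(\<Prod>b\<in>(Basis :: (real^'n) set). h b) = (\<Prod>i\<in>UNIV. h (axis i 1))" for h :: "real^'n \<Rightarrow> 'b"
    unfolding Basis by (simp add: prod.reindex[OF inj])
  have "(\<Prod>i\<in>UNIV. g i (x $ i)) = (\<Prod>b\<in>Basis. g (axis_index b) (x \<bullet> b))" for x :: "real^'n"
    by (simp add: prod_Basis inner_axis)
  moreover have "(\<Prod>i\<in>UNIV. \<integral>t. g i t \<partial>lborel) = (\<Prod>b\<in>(Basis :: (real^'n) set). \<integral>t. g (axis_index b) t \<partial>lborel)"
    by (simp add: prod_Basis)
  ultimately show ?thesis
    using integral_lborel_prod[where g = "\<lambda>b. g (axis_index b)"] assms by simp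
qed

lemma set_integral_exp_int:
  fixes n :: int
  shows "(LINT t:{0..2*pi}|lborel. exp (\<i> * (of_int n * of_real t))) = (if n = 0 then of_real (2 * pi) else 0)"
proof (cases "n = 0")
  case True
  then show ?thesis by (simp add: set_lebesgue_integral_def scaleR_conv_of_real)
next
  case False
  define G where "G z = exp (\<i> * (of_int n * z)) / (\<i> * of_int n)" for z :: complex
  have "(LBINT t=ereal 0..ereal (2*pi). exp (\<i> * (of_int n * of_real t))) = G (of_real (2*pi)) - G (of_real 0)"
  proof (rule interval_integral_FTC_finite[where F = "\<lambda>t. G (of_real t)"])
    show "continuous_on {min 0 (2 * pi)..max 0 (2 * pi)} (\<lambda>t. exp (\<i> * (of_int n * complex_of_real t)))"
      by (intro continuous_intros)
    fix x :: real
    have "(G has_field_derivative exp (\<i> * (of_int n * complex_of_real x))) (at (of_real x))"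
      unfolding G_def using False by (auto intro!: derivative_eq_intros simp: field_simps)
    then show "((\<lambda>t. G (of_real t)) has_vector_derivative exp (\<i> * (of_int n * complex_of_real x)))
        (at x within {min 0 (2 * pi)..max 0 (2 * pi)})"
      by (rule has_vector_derivative_real_field)
  qed
  also have "G (of_real (2*pi)) = G (of_real 0)"
    using exp_integer_2pi[of "of_int n"] by (simp add: G_def mult_ac)
  finally show ?thesis
    using False by (simp add: interval_integral_Icc)
qed

lemma borel_measurable_cnj [measurable]:
  "f \<in> borel_measurable M \<Longrightarrow> (\<lambda>x. cnj (f x)) \<in> borel_measurable M" for f :: "'a \<Rightarrow> complex"
  by (rule measurable_compose[OF _ borel_measurable_continuous_onI[OF continuous_on_cnj[OF continuous_on_id]]])

lemma continuous_on_monom_T: "continuous_on UNIV (monom_T m)"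
  unfolding monom_T_def by (intro continuous_intros)

lemma borel_measurable_monom_T [measurable]: "monom_T m \<in> borel_measurable borel"
  by (rule borel_measurable_continuous_onI[OF continuous_on_monom_T])

lemma norm_monom_T [simp]: "cmod (monom_T m \<theta>) = 1"
  unfolding monom_T_def by (rule norm_exp_i_times)

lemma monom_T_mult_cnj: "monom_T m \<theta> * cnj (monom_T m' \<theta>) = monom_T (\<lambda>i. m i - m' i) \<theta>"
  unfolding monom_T_def
  by (simp add: exp_cnj cnj_sum exp_add[symmetric] sum_subtractf algebra_simps flip: sum_distrib_left)

lemma cnj_monom_T: "cnj (monom_T m \<theta>) = monom_T (\<lambda>i. - m i) \<theta>"
  unfolding monom_T_def by (simp add: exp_cnj cnj_sum sum_negf)

lemma set_integral_monom_T:
  "(LINT \<theta>:torus_box|lborel. monom_T m \<theta>) = (if m = (\<lambda>_. 0) then of_real ((2 * pi) ^ CARD('d)) else 0)"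
  for m :: "'d::finite \<Rightarrow> int"
proof -
  define g where "g i t = indicator {0..2*pi} t *\<^sub>R exp (\<i> * (of_int (m i) * of_real t))" for i t
  have "indicator torus_box \<theta> *\<^sub>R monom_T m \<theta> = (\<Prod>i\<in>UNIV. g i (\<theta> $ i))" for \<theta> :: "real^'d"
  proof -
    have "indicator torus_box \<theta> = (\<Prod>i\<in>UNIV. indicator {0..2*pi} (\<theta> $ i) :: real)"
      by (auto simp: torus_box_def mem_box_cart indicator_def prod_zero_iff)
    moreover have "monom_T m \<theta> = (\<Prod>i\<in>UNIV. exp (\<i> * (of_int (m i) * of_real (\<theta> $ i))))"
      unfolding monom_T_def by (simp add: exp_sum[symmetric] sum_distrib_left mult_ac)
    ultimately show ?thesis
      by (simp add: g_def scaleR_conv_of_real prod.distrib)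
  qed
  then have "(LINT \<theta>:torus_box|lborel. monom_T m \<theta>) = (\<Prod>i\<in>UNIV. \<integral>t. g i t \<partial>lborel)"
    unfolding set_lebesgue_integral_def
    by (simp only:) (rule integral_lborel_prod_vec,
        auto simp: g_def indicator_def intro!: integrableI_bounded_set[where A = "{0..2*pi}" and B = 1])
  also have "\<dots> = (\<Prod>i\<in>UNIV. if m i = 0 then complex_of_real (2 * pi) else 0)"
    using set_integral_exp_int by (simp add: g_def set_lebesgue_integral_def)
  also have "\<dots> = (if m = (\<lambda>_. 0) then of_real ((2 * pi) ^ CARD('d)) else 0)"
    by (auto simp: prod_zero_iff fun_eq_iff)
  finally show ?thesis .
qed

section \<open>The Toeplitz matrix\<close>

lemma set_integrable_torus_box:
  fixes h :: "real^'d::finite \<Rightarrow> 'b::{banach, second_countable_topology}"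
  assumes "h \<in> borel_measurable lborel" and "AE \<theta> in lborel. \<theta> \<in> torus_box \<longrightarrow> norm (h \<theta>) \<le> K"
  shows "set_integrable lborel torus_box h"
  unfolding set_integrable_def
  by (rule integrableI_bounded_set[where A = torus_box and B = K])
     (use assms in \<open>auto simp: torus_box_def emeasure_lborel_cbox_eq\<close>)

definition trig_poly :: "('d::finite \<Rightarrow> nat) set \<Rightarrow> (('d \<Rightarrow> nat) \<Rightarrow> complex) \<Rightarrow> real^'d \<Rightarrow> complex" where
  "trig_poly F a \<theta> = (\<Sum>k\<in>F. a k * monom_T (\<lambda>i. int (k i)) \<theta>)"

lemma borel_measurable_trig_poly [measurable]: "trig_poly F a \<in> borel_measurable borel"
  unfolding trig_poly_def by measurable

lemma norm_trig_poly_le: "cmod (trig_poly F a \<theta>) \<le> (\<Sum>k\<in>F. cmod (a k))"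
  unfolding trig_poly_def by (rule order_trans[OF norm_sum]) (simp add: norm_mult)

lemma L2_inner_trig_poly:
  fixes \<psi> :: "real^'d::finite \<Rightarrow> complex"
  assumes [measurable]: "\<psi> \<in> borel_measurable lborel"
    and bound: "AE \<theta> in lborel. \<theta> \<in> torus_box \<longrightarrow> cmod (\<psi> \<theta>) \<le> K"
    and F: "finite F" and G: "finite G"
  shows "L2_inner (\<lambda>\<theta>. \<psi> \<theta> * trig_poly F a \<theta>) (trig_poly G b)
    = (\<Sum>k\<in>F. \<Sum>l\<in>G. a k * cnj (b l) *
        L2_inner (\<lambda>\<theta>. \<psi> \<theta> * monom_T (\<lambda>i. int (k i)) \<theta>) (monom_T (\<lambda>i. int (l i))))"
proof -
  let ?h = "\<lambda>k l \<theta>. indicator torus_box \<theta> *\<^sub>R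
      (\<psi> \<theta> * monom_T (\<lambda>i. int (k i)) \<theta> * cnj (monom_T (\<lambda>i. int (l i)) \<theta>))"
  have "set_integrable lborel torus_box
      (\<lambda>\<theta>. \<psi> \<theta> * monom_T (\<lambda>i. int (k i)) \<theta> * cnj (monom_T (\<lambda>i. int (l i)) \<theta>))" for k l
    by (rule set_integrable_torus_box[where K = K]) (measurable, use bound in \<open>simp add: norm_mult\<close>)
  then have int: "integrable lborel (\<lambda>\<theta>. a k * cnj (b l) * ?h k l \<theta>)" for k l
    by (intro integrable_mult_right) (simp add: set_integrable_def)
  have "(LINT \<theta>:torus_box|lborel. \<psi> \<theta> * trig_poly F a \<theta> * cnj (trig_poly G b \<theta>))
      = (\<integral>\<theta>. (\<Sum>k\<in>F. \<Sum>l\<in>G. a k * cnj (b l) * ?h k l \<theta>) \<partial>lborel)"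
    unfolding set_lebesgue_integral_def trig_poly_def
    by (intro Bochner_Integration.integral_cong refl)
       (simp add: sum_distrib_left sum_distrib_right scaleR_sum_right mult_ac)
  also have "\<dots> = (\<Sum>k\<in>F. \<integral>\<theta>. (\<Sum>l\<in>G. a k * cnj (b l) * ?h k l \<theta>) \<partial>lborel)"
    by (intro Bochner_Integration.integral_sum Bochner_Integration.integrable_sum int)
  also have "\<dots> = (\<Sum>k\<in>F. \<Sum>l\<in>G. \<integral>\<theta>. a k * cnj (b l) * ?h k l \<theta> \<partial>lborel)"
    by (intro sum.cong refl Bochner_Integration.integral_sum int)
  also have "\<dots> = (\<Sum>k\<in>F. \<Sum>l\<in>G. a k * cnj (b l) * (\<integral>\<theta>. ?h k l \<theta> \<partial>lborel))"
    by (simp only: integral_mult_right_zero)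
  finally show ?thesis
    by (simp add: L2_inner_def set_lebesgue_integral_def scaleR_sum_right mult.assoc)
qed

lemma L2_inner_monom_T: "L2_inner (monom_T m) (monom_T m') = (if m = m' then 1 else 0)"
  for m m' :: "'d::finite \<Rightarrow> int"
proof -
  have "(\<lambda>i. m i - m' i) = (\<lambda>_. 0) \<longleftrightarrow> m = m'"
    by (auto simp: fun_eq_iff)
  then show ?thesis
    by (auto simp: L2_inner_def monom_T_mult_cnj set_integral_monom_T scaleR_conv_of_real)
qed

lemma L2_norm_trig_poly:
  fixes F :: "('d::finite \<Rightarrow> nat) set"
  assumes "finite F"
  shows "1 / (2 * pi) ^ CARD('d) * (LINT \<theta>:torus_box|lborel. (cmod (trig_poly F a \<theta>))\<^sup>2)
    = (\<Sum>k\<in>F. (cmod (a k))\<^sup>2)"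
proof -
  have monom_eq: "(\<lambda>i. int (k i)) = (\<lambda>i. int (l i)) \<longleftrightarrow> k = l" for k l :: "'d \<Rightarrow> nat"
    by (auto simp: fun_eq_iff)
  have "complex_of_real (1 / (2 * pi) ^ CARD('d) * (LINT \<theta>:torus_box|lborel. (cmod (trig_poly F a \<theta>))\<^sup>2))
      = L2_inner (\<lambda>\<theta>. 1 * trig_poly F a \<theta>) (trig_poly F a)"
    by (simp add: L2_inner_def scaleR_conv_of_real complex_norm_square[unfolded of_real_power]
        flip: set_integral_complex_of_real)
  also have "\<dots> = (\<Sum>k\<in>F. \<Sum>l\<in>F. a k * cnj (a l) * (if k = l then 1 else 0))"
    using L2_inner_trig_poly[where \<psi> = "\<lambda>_. 1" and K = 1 and a = a and b = a, OF _ _ assms assms]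
    by (simp add: L2_inner_monom_T monom_eq)
  also have "\<dots> = of_real (\<Sum>k\<in>F. (cmod (a k))\<^sup>2)"
    using assms by (simp add: if_distrib sum_mult_cnj cong: if_cong)
  finally show ?thesis by (simp only: of_real_eq_iff)
qed

lemma two_mult_le_weighted_squares:
  fixes u v t :: real
  assumes "t > 0"
  shows "2 * u * v \<le> t * u\<^sup>2 + v\<^sup>2 / t"
proof -
  have "0 \<le> (t * u - v)\<^sup>2 / t" using assms by simp
  also have "\<dots> = t * u\<^sup>2 + v\<^sup>2 / t - 2 * u * v"
    using assms by (simp add: power2_eq_square field_simps)
  finally show ?thesis by simp
qed

lemma le_mult_sqrt_if_weighted_bound:
  fixes x A B M :: real
  assumes "0 < A" "0 < B" and bound: "\<And>t. 0 < t \<Longrightarrow> x \<le> M / 2 * (t * A + B / t)"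
  shows "x \<le> M * sqrt A * sqrt B"
proof -
  have "x \<le> M / 2 * (sqrt B / sqrt A * A + B / (sqrt B / sqrt A))"
    using bound[of "sqrt B / sqrt A"] assms by simp
  also have "\<dots> = M * sqrt A * sqrt B"
    using assms by (simp add: field_simps real_sqrt_mult_self flip: real_sqrt_mult)
  finally show ?thesis .
qed

definition toeplitz_matrix :: "(real^'d::finite \<Rightarrow> complex) \<Rightarrow> ('d \<Rightarrow> nat) \<Rightarrow> ('d \<Rightarrow> nat) \<Rightarrow> complex" where
  "toeplitz_matrix \<phi> k l = L2_inner (\<lambda>\<theta>. \<phi> \<theta> * monom_T (\<lambda>i. int (k i)) \<theta>) (monom_T (\<lambda>i. int (l i)))"

lemma toeplitz_eq_matrix_op: "toeplitz \<phi> = matrix_op (toeplitz_matrix \<phi>)"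
  by (simp add: fun_eq_iff toeplitz_def matrix_op_def toeplitz_matrix_def)

lemma fourier_coeff_eq_toeplitz_matrix:
  "fourier_coeff \<phi> (\<lambda>i. int (k i) - int (l i)) = toeplitz_matrix \<phi> l k"
proof -
  have "cnj (monom_T (\<lambda>i. int (k i) - int (l i)) \<theta>)
      = monom_T (\<lambda>i. int (l i)) \<theta> * cnj (monom_T (\<lambda>i. int (k i)) \<theta>)" for \<theta>
    by (subst monom_T_mult_cnj) (simp only: cnj_monom_T minus_diff_eq)
  then show ?thesis
    by (simp add: fourier_coeff_def toeplitz_matrix_def L2_inner_def mult.assoc)
qed

lemma toeplitz_matrix_weighted_bound:
  fixes \<phi> :: "real^'d::finite \<Rightarrow> complex"
  assumes [measurable]: "\<phi> \<in> borel_measurable lborel"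
    and bound: "AE \<theta> in lborel. \<theta> \<in> torus_box \<longrightarrow> cmod (\<phi> \<theta>) \<le> M" and "0 \<le> M"
    and F: "finite F" and G: "finite G" and "0 < t"
  shows "cmod (\<Sum>k\<in>F. \<Sum>l\<in>G. a k * cnj (b l) * toeplitz_matrix \<phi> k l)
    \<le> M / 2 * (t * (\<Sum>k\<in>F. (cmod (a k))\<^sup>2) + (\<Sum>l\<in>G. (cmod (b l))\<^sup>2) / t)"
proof -
  define f g where "f = trig_poly F a" and "g = trig_poly G b"
  define c :: real where "c = 1 / (2 * pi) ^ CARD('d)"
  have "0 < c" by (simp add: c_def)
  have [measurable]: "f \<in> borel_measurable borel" "g \<in> borel_measurable borel"
    by (simp_all add: f_def g_def)
  have square_integrable: "set_integrable lborel torus_box (\<lambda>\<theta>. (cmod (trig_poly H p \<theta>))\<^sup>2)" for H p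
    by (rule set_integrable_torus_box[where K = "(\<Sum>k\<in>H. cmod (p k))\<^sup>2"])
       (auto intro!: AE_I2 power_mono norm_trig_poly_le)
  have product_integrable: "set_integrable lborel torus_box (\<lambda>\<theta>. \<phi> \<theta> * f \<theta> * cnj (g \<theta>))"
  proof (rule set_integrable_torus_box[where K = "M * (\<Sum>k\<in>F. cmod (a k)) * (\<Sum>l\<in>G. cmod (b l))"])
    show "AE \<theta> in lborel. \<theta> \<in> torus_box \<longrightarrow>
        norm (\<phi> \<theta> * f \<theta> * cnj (g \<theta>)) \<le> M * (\<Sum>k\<in>F. cmod (a k)) * (\<Sum>l\<in>G. cmod (b l))"
      using bound by eventually_elim
        (use \<open>0 \<le> M\<close> in \<open>auto simp: norm_mult f_def g_def intro!: mult_mono mult_nonneg_nonneg norm_trig_poly_le sum_nonneg\<close>)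
  qed simp
  have weight_integrable:
    "set_integrable lborel torus_box (\<lambda>\<theta>. M / 2 * t * (cmod (f \<theta>))\<^sup>2 + M / (2 * t) * (cmod (g \<theta>))\<^sup>2)"
    by (intro set_integral_add(1) set_integrable_mult_right) (simp_all add: f_def g_def square_integrable)
  have "(\<Sum>k\<in>F. \<Sum>l\<in>G. a k * cnj (b l) * toeplitz_matrix \<phi> k l)
      = c *\<^sub>R (LINT \<theta>:torus_box|lborel. \<phi> \<theta> * f \<theta> * cnj (g \<theta>))"
    using L2_inner_trig_poly[OF _ bound F G, of a b]
    by (simp add: toeplitz_matrix_def L2_inner_def f_def g_def c_def mult.assoc)
  then have "cmod (\<Sum>k\<in>F. \<Sum>l\<in>G. a k * cnj (b l) * toeplitz_matrix \<phi> k l)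
      \<le> c * (LINT \<theta>:torus_box|lborel. cmod (\<phi> \<theta> * f \<theta> * cnj (g \<theta>)))"
    using set_integral_norm_bound[OF product_integrable] \<open>0 < c\<close> by simp
  also have "\<dots> \<le> c * (LINT \<theta>:torus_box|lborel. M / 2 * t * (cmod (f \<theta>))\<^sup>2 + M / (2 * t) * (cmod (g \<theta>))\<^sup>2)"
  proof (intro mult_left_mono set_integral_mono_AE)
    show "AE \<theta>\<in>torus_box in lborel.
        cmod (\<phi> \<theta> * f \<theta> * cnj (g \<theta>)) \<le> M / 2 * t * (cmod (f \<theta>))\<^sup>2 + M / (2 * t) * (cmod (g \<theta>))\<^sup>2"
      using bound
    proof eventually_elim
      case (elim \<theta>)
      show ?case
      proof
        assume "\<theta> \<in> torus_box"
        with elim have "cmod (\<phi> \<theta> * f \<theta> * cnj (g \<theta>)) \<le> M * (cmod (f \<theta>) * cmod (g \<theta>))"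
          using mult_right_mono[of "cmod (\<phi> \<theta>)" M "cmod (f \<theta>) * cmod (g \<theta>)"]
          by (simp add: norm_mult mult.assoc)
        also have "\<dots> \<le> M * ((t * (cmod (f \<theta>))\<^sup>2 + (cmod (g \<theta>))\<^sup>2 / t) / 2)"
          using two_mult_le_weighted_squares[OF \<open>0 < t\<close>, of "cmod (f \<theta>)" "cmod (g \<theta>)"] \<open>0 \<le> M\<close>
          by (intro mult_left_mono) simp_all
        finally show "cmod (\<phi> \<theta> * f \<theta> * cnj (g \<theta>))
            \<le> M / 2 * t * (cmod (f \<theta>))\<^sup>2 + M / (2 * t) * (cmod (g \<theta>))\<^sup>2"
          by (simp add: field_simps)
      qed
    qed
  qed (use set_integrable_norm[OF product_integrable] weight_integrable \<open>0 < c\<close> in simp_all)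
  also have "\<dots> = M / 2 * (t * (c * (LINT \<theta>:torus_box|lborel. (cmod (f \<theta>))\<^sup>2))
      + (c * (LINT \<theta>:torus_box|lborel. (cmod (g \<theta>))\<^sup>2)) / t)"
  proof -
    have "(LINT \<theta>:torus_box|lborel. M / 2 * t * (cmod (f \<theta>))\<^sup>2 + M / (2 * t) * (cmod (g \<theta>))\<^sup>2)
        = M / 2 * t * (LINT \<theta>:torus_box|lborel. (cmod (f \<theta>))\<^sup>2)
          + M / (2 * t) * (LINT \<theta>:torus_box|lborel. (cmod (g \<theta>))\<^sup>2)"
      by (subst set_integral_add(2)) (simp_all add: f_def g_def square_integrable)
    then show ?thesis by (simp add: field_simps)
  qed
  also have "\<dots> = M / 2 * (t * (\<Sum>k\<in>F. (cmod (a k))\<^sup>2) + (\<Sum>l\<in>G. (cmod (b l))\<^sup>2) / t)"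
    unfolding c_def f_def g_def by (simp only: L2_norm_trig_poly[OF F] L2_norm_trig_poly[OF G])
  finally show ?thesis .
qed

lemma toeplitz_matrix_bounded:
  fixes \<phi> :: "real^'d::finite \<Rightarrow> complex"
  assumes "Linfty_T \<phi>"
  obtains M where "bounded_matrix (toeplitz_matrix \<phi>) M"
proof -
  obtain B where meas: "\<phi> \<in> borel_measurable lborel"
    and bound: "AE \<theta> in lborel. \<theta> \<in> torus_box \<longrightarrow> cmod (\<phi> \<theta>) \<le> B"
    using assms unfolding Linfty_T_def by blast
  have bound': "AE \<theta> in lborel. \<theta> \<in> torus_box \<longrightarrow> cmod (\<phi> \<theta>) \<le> max B 0"
    using bound by eventually_elim auto
  have "bounded_matrix (toeplitz_matrix \<phi>) (max B 0)"
  proof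
    fix F G :: "('d \<Rightarrow> nat) set" and a b :: "('d \<Rightarrow> nat) \<Rightarrow> complex"
    assume F: "finite F" and G: "finite G"
    let ?A = "\<Sum>k\<in>F. (cmod (a k))\<^sup>2" and ?B = "\<Sum>l\<in>G. (cmod (b l))\<^sup>2"
    show "cmod (\<Sum>k\<in>F. \<Sum>l\<in>G. a k * cnj (b l) * toeplitz_matrix \<phi> k l) \<le> max B 0 * sqrt ?A * sqrt ?B"
    proof (cases "?A = 0 \<or> ?B = 0")
      case True
      then have "(\<forall>k\<in>F. a k = 0) \<or> (\<forall>l\<in>G. b l = 0)"
        using F G by (auto simp: sum_nonneg_eq_0_iff)
      then show ?thesis by auto
    next
      case False
      then have "0 < ?A" "0 < ?B" by (simp_all add: less_le sum_nonneg)
      then show ?thesis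
        using toeplitz_matrix_weighted_bound[OF meas bound' _ F G] by (intro le_mult_sqrt_if_weighted_bound) auto
    qed
  qed
  then show ?thesis by (rule that)
qed

theorem theorem7p5:
  fixes \<phi> :: "real^'d::finite \<Rightarrow> complex"
    and C :: "(('d \<Rightarrow> nat) \<Rightarrow> complex) \<Rightarrow> (('d \<Rightarrow> nat) \<Rightarrow> complex)"
  assumes "CARD('d) \<ge> 2"
    and "Linfty_T \<phi>"
    and "is_conjugation C"
  shows "(C_symmetric C (toeplitz \<phi>)
          \<longleftrightarrow> (\<forall>k l. fourier_coeff \<phi> (\<lambda>i. int (k i) - int (l i)) =
                H2_inner (toeplitz \<phi> (C (H2_monom k))) (C (H2_monom l))))
       \<and> (C_symmetric C (toeplitz \<phi>)
          \<longleftrightarrow> (\<forall>k l. fourier_coeff \<phi> (\<lambda>i. int (k i) - int (l i)) =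
                H2_inner (H2_adj (canon_unitary C) (toeplitz \<phi> (canon_unitary C (H2_monom k))))
                         (H2_monom l)))"
proof -
  obtain M where "bounded_matrix (toeplitz_matrix \<phi>) M"
    using toeplitz_matrix_bounded[OF assms(2)] .
  then interpret bounded_matrix "toeplitz_matrix \<phi>" M .
  have maps_H2: "\<And>x. x \<in> H2 \<Longrightarrow> toeplitz \<phi> x \<in> H2"
    and adjoint: "has_H2_adjoint (toeplitz \<phi>)"
    using matrix_op_in_H2 has_H2_adjoint_matrix_op by (simp_all add: toeplitz_eq_matrix_op)
  have entries: "fourier_coeff \<phi> (\<lambda>i. int (k i) - int (l i)) = H2_inner (toeplitz \<phi> (H2_monom l)) (H2_monom k)"
    for k l
    by (simp add: fourier_coeff_eq_toeplitz_matrix toeplitz_eq_matrix_op matrix_op_monom H2_inner_monom_right)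
  have compression: "H2_inner (H2_adj (canon_unitary C) (toeplitz \<phi> (canon_unitary C (H2_monom k)))) (H2_monom l)
      = H2_inner (toeplitz \<phi> (C (H2_monom k))) (C (H2_monom l))" for k l
    using assms(3) by (simp add: canon_unitary_monom H2_inner_adj_canon_unitary_monom maps_H2
        conjugation_in_H2 H2_monom_in_H2)
  show ?thesis
    using C_symmetric_iff_monom[OF assms(3) maps_H2 adjoint] by (simp add: entries compression)
qed

end
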